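(* Let $G$ be a group with a finite generating set $S$ not containing the identity, and let $d_W$ and $d_C$ be the word metric and the cardinal metric on $G$ with respect to $S$. If $(G,d_W)$ has infinite diameter, then $(G,d_W)$ and $(G,d_C)$ are not quasi-isometric.
   Context: The word metric: $d_W(g,g)=0$ and for $g\ne h$, $d_W(g,h)$ is the least $n\in\mathbb{N}$ such that $g^{-1}h=s_1^{\epsilon_1}\cdots s_n^{\epsilon_n}$ with $s_i\in S$, $\epsilon_i\in\{\pm1\}$. The cardinal norm is $\|g\| = \min\{|A| : A\subseteq S,\ g\in\langle A\rangle\}$, where $\langle A\rangle$ is the subgroup generated by $A$, and $d_C(g,h)=\|g^{-1}h\|$. *)

theory Defs
  imports "HOL-Algebra.Algebra"
begin

definition word_eval :: "('a, 'b) monoid_scheme \<Rightarrow> ('a \<times> bool) list \<Rightarrow> 'a" where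
  "word_eval G ws = foldr (\<lambda>(s, e) acc. (if e then s else inv\<^bsub>G\<^esub> s) \<otimes>\<^bsub>G\<^esub> acc) ws \<one>\<^bsub>G\<^esub>"

definition word_norm :: "('a, 'b) monoid_scheme \<Rightarrow> 'a set \<Rightarrow> 'a \<Rightarrow> nat" where
  "word_norm G S g = (LEAST n. \<exists>ws. length ws = n \<and> fst ` set ws \<subseteq> S \<and> word_eval G ws = g)"

definition word_metric :: "('a, 'b) monoid_scheme \<Rightarrow> 'a set \<Rightarrow> 'a \<Rightarrow> 'a \<Rightarrow> nat" where
  "word_metric G S g h = (if g = h then 0 else word_norm G S (inv\<^bsub>G\<^esub> g \<otimes>\<^bsub>G\<^esub> h))"

definition cardinal_norm :: "('a, 'b) monoid_scheme \<Rightarrow> 'a set \<Rightarrow> 'a \<Rightarrow> nat" where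
  "cardinal_norm G S g = (LEAST n. \<exists>A. A \<subseteq> S \<and> card A = n \<and> g \<in> generate G A)"

definition cardinal_metric :: "('a, 'b) monoid_scheme \<Rightarrow> 'a set \<Rightarrow> 'a \<Rightarrow> 'a \<Rightarrow> nat" where
  "cardinal_metric G S g h = cardinal_norm G S (inv\<^bsub>G\<^esub> g \<otimes>\<^bsub>G\<^esub> h)"

definition quasi_isometric :: "'a set \<Rightarrow> ('a \<Rightarrow> 'a \<Rightarrow> real) \<Rightarrow> 'c set \<Rightarrow> ('c \<Rightarrow> 'c \<Rightarrow> real) \<Rightarrow> bool" where
  "quasi_isometric P d1 Q d2 \<longleftrightarrow>
     (\<exists>f L K C. f ` P \<subseteq> Q \<and> L \<ge> 1 \<and> K \<ge> 0 \<and> C \<ge> 0 \<and>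
        (\<forall>x\<in>P. \<forall>y\<in>P. d1 x y / L - K \<le> d2 (f x) (f y) \<and> d2 (f x) (f y) \<le> L * d1 x y + K) \<and>
        (\<forall>z\<in>Q. \<exists>x\<in>P. d2 z (f x) \<le> C))"

end

theory Submission
  imports Defs
begin

text \<open>Every element of the group lies in the subgroup generated by all of S, so the cardinal
  metric is bounded by card S. A quasi-isometry transports this bound back to the word metric,
  contradicting its infinite diameter.\<close>

lemma cardinal_norm_le_card:
  assumes "g \<in> generate G S"
  shows "cardinal_norm G S g \<le> card S"
  unfolding cardinal_norm_def using assms by (intro Least_le) blast

lemma (in group) cardinal_metric_le_card:
  assumes "generate G S = carrier G" and "g \<in> carrier G" and "h \<in> carrier G"
  shows "cardinal_metric G S g h \<le> card S"
  unfolding cardinal_metric_def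
  using assms by (intro cardinal_norm_le_card) simp

lemma quasi_isometric_bounded_source:
  assumes "quasi_isometric P d1 Q d2"
    and "\<And>z w. z \<in> Q \<Longrightarrow> w \<in> Q \<Longrightarrow> d2 z w \<le> B"
  shows "\<exists>D. \<forall>x\<in>P. \<forall>y\<in>P. d1 x y \<le> D"
proof -
  obtain f L K where f: "f ` P \<subseteq> Q" and L: "L \<ge> 1"
    and lower: "\<forall>x\<in>P. \<forall>y\<in>P. d1 x y / L - K \<le> d2 (f x) (f y)"
    using assms(1) unfolding quasi_isometric_def by blast
  have "d1 x y \<le> L * (B + K)" if "x \<in> P" "y \<in> P" for x y
  proof -
    have "d1 x y / L \<le> B + K"
      using lower assms(2)[of "f x" "f y"] f that by fastforce
    then show ?thesis
      using L by (simp add: divide_le_eq mult.commute)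
  qed
  then show ?thesis by blast
qed

theorem mainTheorem6:
  fixes G (structure) and S :: "'a set"
  assumes "group G"
    and "finite S" and "S \<subseteq> carrier G" and "\<one>\<^bsub>G\<^esub> \<notin> S"
    and "generate G S = carrier G"
    and "\<not> (\<exists>D. \<forall>g\<in>carrier G. \<forall>h\<in>carrier G. word_metric G S g h \<le> D)"
  shows "\<not> quasi_isometric (carrier G) (\<lambda>g h. real (word_metric G S g h))
                            (carrier G) (\<lambda>g h. real (cardinal_metric G S g h))"
proof
  assume "quasi_isometric (carrier G) (\<lambda>g h. real (word_metric G S g h))
                            (carrier G) (\<lambda>g h. real (cardinal_metric G S g h))"
  moreover have "real (cardinal_metric G S g h) \<le> real (card S)"
    if "g \<in> carrier G" "h \<in> carrier G" for g h
    using group.cardinal_metric_le_card[OF assms(1) assms(5) that] by simp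
  ultimately obtain D where D: "\<forall>x\<in>carrier G. \<forall>y\<in>carrier G. real (word_metric G S x y) \<le> D"
    using quasi_isometric_bounded_source by blast
  have "word_metric G S x y \<le> nat \<lceil>D\<rceil>" if "x \<in> carrier G" "y \<in> carrier G" for x y
  proof -
    have "real (word_metric G S x y) \<le> D" using D that by blast
    then show ?thesis by linarith
  qed
  then show False using assms(6) by blast
qed

end
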